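(* Let $\varphi\colon M\rightarrow N$ be a homomorphism of monoids such that $N$ is locally finite and the trace $\mathrm{tr}_{\varphi}(n_1,n_2)$ is locally finite for all $n_1,n_2\in N$. Then $M$ is locally finite.
   Context: A monoid is locally finite if all its finitely generated submonoids are finite. For a monoid homomorphism $\varphi\colon M\to N$ and $(n_1,n_2)\in N\times N$, the trace $\mathrm{tr}_{\varphi}(n_1,n_2)$ is the quotient of the submonoid $\{m\in M\mid n_1\varphi(m)=n_1,\ \varphi(m)n_2=n_2\}$ of $M$ by the congruence $\equiv$ defined by $m\equiv m'$ if and only if $m_1mm_2=m_1m'm_2$ for all $m_1\in\varphi^{-1}(n_1)$ and all $m_2\in\varphi^{-1}(n_2)$. *)

theory Defs
  imports "HOL-Algebra.Group"
begin

definition gen_submonoid :: "('a, 'b) monoid_scheme \<Rightarrow> 'a set \<Rightarrow> 'a set" where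
  "gen_submonoid G A = \<Inter> {H. submonoid H G \<and> A \<subseteq> H}"

definition locally_finite_monoid :: "('a, 'b) monoid_scheme \<Rightarrow> bool" where
  "locally_finite_monoid G \<longleftrightarrow>
     (\<forall>A. A \<subseteq> carrier G \<and> finite A \<longrightarrow> finite (gen_submonoid G A))"

definition monoid_hom :: "('a, 'c) monoid_scheme \<Rightarrow> ('b, 'd) monoid_scheme \<Rightarrow> ('a \<Rightarrow> 'b) set" where
  "monoid_hom M N = {f \<in> hom M N. f \<one>\<^bsub>M\<^esub> = \<one>\<^bsub>N\<^esub>}"

definition trace_set ::
  "('a \<Rightarrow> 'b) \<Rightarrow> ('a, 'c) monoid_scheme \<Rightarrow> ('b, 'd) monoid_scheme \<Rightarrow> 'b \<Rightarrow> 'b \<Rightarrow> 'a set" where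
  "trace_set \<phi> M N n1 n2 =
     {m \<in> carrier M. n1 \<otimes>\<^bsub>N\<^esub> \<phi> m = n1 \<and> \<phi> m \<otimes>\<^bsub>N\<^esub> n2 = n2}"

definition trace_rel ::
  "('a \<Rightarrow> 'b) \<Rightarrow> ('a, 'c) monoid_scheme \<Rightarrow> ('b, 'd) monoid_scheme \<Rightarrow> 'b \<Rightarrow> 'b \<Rightarrow> ('a \<times> 'a) set" where
  "trace_rel \<phi> M N n1 n2 =
     {(m, m'). m \<in> trace_set \<phi> M N n1 n2 \<and> m' \<in> trace_set \<phi> M N n1 n2 \<and>
        (\<forall>m1 \<in> carrier M. \<forall>m2 \<in> carrier M. \<phi> m1 = n1 \<longrightarrow> \<phi> m2 = n2 \<longrightarrow>
           m1 \<otimes>\<^bsub>M\<^esub> m \<otimes>\<^bsub>M\<^esub> m2 = m1 \<otimes>\<^bsub>M\<^esub> m' \<otimes>\<^bsub>M\<^esub> m2)}"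

text \<open>Elements are equivalence classes; the product of two classes is the class of the
  product of representatives (given as the union over all representatives, which is a
  single class since the relation is a congruence).\<close>
definition trace_monoid ::
  "('a \<Rightarrow> 'b) \<Rightarrow> ('a, 'c) monoid_scheme \<Rightarrow> ('b, 'd) monoid_scheme \<Rightarrow> 'b \<Rightarrow> 'b \<Rightarrow> 'a set monoid" where
  "trace_monoid \<phi> M N n1 n2 =
     \<lparr> carrier = trace_set \<phi> M N n1 n2 // trace_rel \<phi> M N n1 n2,
       mult = (\<lambda>X Y. \<Union> {trace_rel \<phi> M N n1 n2 `` {x \<otimes>\<^bsub>M\<^esub> y} | x y. x \<in> X \<and> y \<in> Y}),
       one = trace_rel \<phi> M N n1 n2 `` {\<one>\<^bsub>M\<^esub>} \<rparr>"

end

theory Submission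
  imports Defs
begin

text \<open>
  Let A be a finite subset of M and T the finite submonoid of N generated by \<phi>(A). Cutting a word
  over A at each position and mapping both halves by \<phi> gives a path of pairs in T \<times> T. We show,
  by induction on a finite set P of pairs, that the maps (x, y) \<mapsto> x m y on the fibres over
  (p, q), for m the value of a word whose path (bordered by p and q) stays in P, are finitely many.
  A word whose path starts at (p, r) is cut at its returns to (p, r) into first-return segments
  followed by a tail that never returns. Both avoid (p, r) in their interior, so the induction
  hypothesis bounds the tails and the trace classes of the segments; the latter generate a finite
  submonoid of the locally finite trace of (p, r), and a class together with the tail determines
  the map of the whole word. For p = q = 1 and P = T \<times> T this bounds the submonoid generated by A.
\<close>

definition word_prod :: "('a, 'b) monoid_scheme \<Rightarrow> 'a list \<Rightarrow> 'a" where
  "word_prod G w = foldr (\<lambda>a b. a \<otimes>\<^bsub>G\<^esub> b) w \<one>\<^bsub>G\<^esub>"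

lemma word_prod_Nil [simp]: "word_prod G [] = \<one>\<^bsub>G\<^esub>"
  by (simp add: word_prod_def)

lemma word_prod_Cons [simp]: "word_prod G (a # w) = a \<otimes>\<^bsub>G\<^esub> word_prod G w"
  by (simp add: word_prod_def)

lemma word_prod_in_submonoid:
  assumes "submonoid H G" "set w \<subseteq> H"
  shows "word_prod G w \<in> H"
  using assms(2) by (induction w) (auto intro: submonoid.one_closed[OF assms(1)] submonoid.m_closed[OF assms(1)])

lemma word_prod_in_gen_submonoid: "w \<in> lists A \<Longrightarrow> word_prod G w \<in> gen_submonoid G A"
  unfolding gen_submonoid_def by (auto intro: word_prod_in_submonoid)

context monoid
begin

lemma word_prod_closed [intro, simp]: "set w \<subseteq> carrier G \<Longrightarrow> word_prod G w \<in> carrier G"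
  by (induction w) auto

lemma word_prod_append:
  "set u \<subseteq> carrier G \<Longrightarrow> set v \<subseteq> carrier G \<Longrightarrow>
    word_prod G (u @ v) = word_prod G u \<otimes> word_prod G v"
  by (induction u) (auto simp: m_assoc)

lemma word_prod_concat:
  "set (concat ws) \<subseteq> carrier G \<Longrightarrow> word_prod G (concat ws) = word_prod G (map (word_prod G) ws)"
  by (induction ws) (auto simp: word_prod_append)

lemma gen_submonoid_subset_word_prods:
  assumes "A \<subseteq> carrier G"
  shows "gen_submonoid G A \<subseteq> word_prod G ` lists A"
  unfolding gen_submonoid_def
proof (rule Inter_lower, safe)
  show "submonoid (word_prod G ` lists A) G"
  proof
    show "word_prod G ` lists A \<subseteq> carrier G" using assms by auto
    show "\<one> \<in> word_prod G ` lists A" by (force intro: image_eqI[of _ _ "[]"])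
  next
    fix x y assume "x \<in> word_prod G ` lists A" "y \<in> word_prod G ` lists A"
    then obtain u v where "x = word_prod G u" "y = word_prod G v" "u \<in> lists A" "v \<in> lists A" by auto
    moreover have "set u \<subseteq> carrier G" "set v \<subseteq> carrier G"
      using \<open>u \<in> lists A\<close> \<open>v \<in> lists A\<close> assms by auto
    ultimately show "x \<otimes> y \<in> word_prod G ` lists A"
      by (auto intro!: image_eqI[of _ _ "u @ v"] simp: word_prod_append)
  qed
  fix a assume "a \<in> A"
  then show "a \<in> word_prod G ` lists A" using assms by (force intro: image_eqI[of _ _ "[a]"])
qed

end

locale monoid_morphism = M: monoid M + N: monoid N
  for M :: "('a, 'c) monoid_scheme" and N :: "('b, 'd) monoid_scheme" +
  fixes \<phi> :: "'a \<Rightarrow> 'b"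
  assumes morphism: "\<phi> \<in> monoid_hom M N"
begin

lemma hom_closed [intro, simp]: "x \<in> carrier M \<Longrightarrow> \<phi> x \<in> carrier N"
  using morphism unfolding monoid_hom_def hom_def by auto

lemma hom_mult [simp]: "x \<in> carrier M \<Longrightarrow> y \<in> carrier M \<Longrightarrow> \<phi> (x \<otimes>\<^bsub>M\<^esub> y) = \<phi> x \<otimes>\<^bsub>N\<^esub> \<phi> y"
  using morphism unfolding monoid_hom_def hom_def by auto

lemma hom_one [simp]: "\<phi> \<one>\<^bsub>M\<^esub> = \<one>\<^bsub>N\<^esub>"
  using morphism unfolding monoid_hom_def by auto

lemma hom_word_prod: "set w \<subseteq> carrier M \<Longrightarrow> \<phi> (word_prod M w) = word_prod N (map \<phi> w)"
  by (induction w) auto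

definition fibre :: "'b \<Rightarrow> 'a set" where
  "fibre p = {x \<in> carrier M. \<phi> x = p}"

definition sandwich :: "'b \<Rightarrow> 'b \<Rightarrow> 'a \<Rightarrow> 'a \<times> 'a \<Rightarrow> 'a" where
  "sandwich p q m = restrict (\<lambda>(x, y). x \<otimes>\<^bsub>M\<^esub> m \<otimes>\<^bsub>M\<^esub> y) (fibre p \<times> fibre q)"

definition left_shift :: "'b \<Rightarrow> 'b \<Rightarrow> 'a \<Rightarrow> ('a \<times> 'a \<Rightarrow> 'a) \<Rightarrow> 'a \<times> 'a \<Rightarrow> 'a" where
  "left_shift p q a F = restrict (\<lambda>(x, y). F (x \<otimes>\<^bsub>M\<^esub> a, y)) (fibre p \<times> fibre q)"

definition right_shift :: "'b \<Rightarrow> 'b \<Rightarrow> 'a \<Rightarrow> ('a \<times> 'a \<Rightarrow> 'a) \<Rightarrow> 'a \<times> 'a \<Rightarrow> 'a" where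
  "right_shift p q b F = restrict (\<lambda>(x, y). F (x, b \<otimes>\<^bsub>M\<^esub> y)) (fibre p \<times> fibre q)"

lemma sandwich_mult_left:
  assumes "a \<in> carrier M" "m \<in> carrier M"
  shows "sandwich p q (a \<otimes>\<^bsub>M\<^esub> m) = left_shift p q a (sandwich (p \<otimes>\<^bsub>N\<^esub> \<phi> a) q m)"
  unfolding sandwich_def left_shift_def
  by (rule restrict_ext) (auto simp: fibre_def assms M.m_assoc)

lemma sandwich_mult_right:
  assumes "b \<in> carrier M" "m \<in> carrier M"
  shows "sandwich p q (m \<otimes>\<^bsub>M\<^esub> b) = right_shift p q b (sandwich p (\<phi> b \<otimes>\<^bsub>N\<^esub> q) m)"
  unfolding sandwich_def right_shift_def
  by (rule restrict_ext) (auto simp: fibre_def assms M.m_assoc)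

lemma sandwich_one_one: "m \<in> carrier M \<Longrightarrow> sandwich \<one>\<^bsub>N\<^esub> \<one>\<^bsub>N\<^esub> m (\<one>\<^bsub>M\<^esub>, \<one>\<^bsub>M\<^esub>) = m"
  by (simp add: sandwich_def fibre_def)

lemma trace_set_submonoid:
  assumes "p \<in> carrier N" "r \<in> carrier N"
  shows "submonoid (trace_set \<phi> M N p r) M"
proof
  fix a b assume "a \<in> trace_set \<phi> M N p r" "b \<in> trace_set \<phi> M N p r"
  then show "a \<otimes>\<^bsub>M\<^esub> b \<in> trace_set \<phi> M N p r"
    using assms unfolding trace_set_def by (auto simp flip: N.m_assoc) (simp add: N.m_assoc)
qed (use assms in \<open>auto simp: trace_set_def\<close>)

lemma trace_rel_iff:
  "(m, m') \<in> trace_rel \<phi> M N p r \<longleftrightarrow>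
     m \<in> trace_set \<phi> M N p r \<and> m' \<in> trace_set \<phi> M N p r \<and> sandwich p r m = sandwich p r m'"
  unfolding trace_rel_def sandwich_def fibre_def restrict_def by (auto simp: fun_eq_iff)

lemma trace_class:
  "m \<in> trace_set \<phi> M N p r \<Longrightarrow>
     trace_rel \<phi> M N p r `` {m} = {m' \<in> trace_set \<phi> M N p r. sandwich p r m' = sandwich p r m}"
  by (auto simp: trace_rel_iff)

lemma trace_sandwich_cong:
  assumes "a \<in> trace_set \<phi> M N p r" "a' \<in> trace_set \<phi> M N p r"
    and "b \<in> trace_set \<phi> M N p r" "b' \<in> trace_set \<phi> M N p r"
    and "sandwich p r a = sandwich p r a'" "sandwich p r b = sandwich p r b'"
  shows "sandwich p r (a \<otimes>\<^bsub>M\<^esub> b) = sandwich p r (a' \<otimes>\<^bsub>M\<^esub> b')"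
proof -
  have "sandwich p r (a \<otimes>\<^bsub>M\<^esub> b) = left_shift p r a (sandwich p r b)"
    using assms(1,3) by (auto simp: sandwich_mult_left trace_set_def)
  also have "\<dots> = sandwich p r (a \<otimes>\<^bsub>M\<^esub> b')"
    using assms(1,4,6) by (auto simp: sandwich_mult_left trace_set_def)
  also have "\<dots> = right_shift p r b' (sandwich p r a)"
    using assms(1,4) by (auto simp: sandwich_mult_right trace_set_def)
  also have "\<dots> = sandwich p r (a' \<otimes>\<^bsub>M\<^esub> b')"
    using assms(2,4,5) by (auto simp: sandwich_mult_right trace_set_def)
  finally show ?thesis .
qed

lemma trace_class_mult:
  assumes "p \<in> carrier N" "r \<in> carrier N" "a \<in> trace_set \<phi> M N p r" "b \<in> trace_set \<phi> M N p r"
  shows "trace_rel \<phi> M N p r `` {a} \<otimes>\<^bsub>trace_monoid \<phi> M N p r\<^esub> trace_rel \<phi> M N p r `` {b} =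
    trace_rel \<phi> M N p r `` {a \<otimes>\<^bsub>M\<^esub> b}"
proof -
  let ?R = "trace_rel \<phi> M N p r" and ?T = "trace_set \<phi> M N p r"
  interpret T: submonoid ?T M using trace_set_submonoid assms(1,2) .
  have "?R `` {x \<otimes>\<^bsub>M\<^esub> y} = ?R `` {a \<otimes>\<^bsub>M\<^esub> b}" if "x \<in> ?R `` {a}" "y \<in> ?R `` {b}" for x y
    using that assms(3,4) trace_sandwich_cong[of x p r a y b] by (simp add: trace_class)
  moreover have "a \<in> ?R `` {a}" "b \<in> ?R `` {b}" using assms(3,4) by (simp_all add: trace_class)
  ultimately have "{?R `` {x \<otimes>\<^bsub>M\<^esub> y} | x y. x \<in> ?R `` {a} \<and> y \<in> ?R `` {b}} = {?R `` {a \<otimes>\<^bsub>M\<^esub> b}}"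
    by blast
  then show ?thesis unfolding trace_monoid_def by simp
qed

lemma trace_class_word_prod:
  assumes "p \<in> carrier N" "r \<in> carrier N" "set xs \<subseteq> trace_set \<phi> M N p r"
  shows "trace_rel \<phi> M N p r `` {word_prod M xs} =
    word_prod (trace_monoid \<phi> M N p r) (map (\<lambda>m. trace_rel \<phi> M N p r `` {m}) xs)"
  using assms(3)
proof (induction xs)
  case Nil
  then show ?case by (simp add: trace_monoid_def)
next
  case (Cons x xs)
  have "word_prod M xs \<in> trace_set \<phi> M N p r"
    using Cons.prems word_prod_in_submonoid[OF trace_set_submonoid[OF assms(1,2)]] by simp
  with Cons show ?case by (simp add: trace_class_mult[symmetric] assms(1,2))
qed

lemma sandwich_mult_trace_class:
  assumes "m' \<in> trace_rel \<phi> M N p r `` {m}" "b \<in> carrier M" "\<phi> b \<otimes>\<^bsub>N\<^esub> q = r"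
  shows "sandwich p q (m \<otimes>\<^bsub>M\<^esub> b) = left_shift p q m' (sandwich p q b)"
proof -
  have m: "m \<in> trace_set \<phi> M N p r" "m' \<in> trace_set \<phi> M N p r" "sandwich p r m = sandwich p r m'"
    using assms(1) by (simp_all add: trace_rel_iff)
  then have "sandwich p q (m \<otimes>\<^bsub>M\<^esub> b) = sandwich p q (m' \<otimes>\<^bsub>M\<^esub> b)"
    using assms(2,3) by (simp add: sandwich_mult_right trace_set_def)
  also have "\<dots> = left_shift p q m' (sandwich p q b)"
    using m(2) assms(2) by (simp add: sandwich_mult_left trace_set_def)
  finally show ?thesis .
qed

definition split_image :: "'b \<Rightarrow> 'b \<Rightarrow> 'a list \<Rightarrow> nat \<Rightarrow> 'b \<times> 'b" where
  "split_image p q w t =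
     (p \<otimes>\<^bsub>N\<^esub> \<phi> (word_prod M (take t w)), \<phi> (word_prod M (drop t w)) \<otimes>\<^bsub>N\<^esub> q)"

definition split_images :: "'b \<Rightarrow> 'b \<Rightarrow> 'a list \<Rightarrow> ('b \<times> 'b) set" where
  "split_images p q w = split_image p q w ` {..length w}"

lemma split_image_0:
  "p \<in> carrier N \<Longrightarrow> split_image p q w 0 = (p, \<phi> (word_prod M w) \<otimes>\<^bsub>N\<^esub> q)"
  by (simp add: split_image_def)

lemma split_image_append_left:
  assumes "set u \<subseteq> carrier M" "set v \<subseteq> carrier M" "q \<in> carrier N" "t \<le> length u"
  shows "split_image p q (u @ v) t = split_image p (\<phi> (word_prod M v) \<otimes>\<^bsub>N\<^esub> q) u t"
proof -
  have "set (drop t u) \<subseteq> carrier M" using assms(1) by (meson in_set_dropD subsetD subsetI)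
  then show ?thesis
    using assms by (simp add: split_image_def M.word_prod_append N.m_assoc)
qed

lemma split_image_append_right:
  assumes "set u \<subseteq> carrier M" "set v \<subseteq> carrier M" "p \<in> carrier N"
  shows "split_image p q (u @ v) (length u + s) = split_image (p \<otimes>\<^bsub>N\<^esub> \<phi> (word_prod M u)) q v s"
proof -
  have "set (take s v) \<subseteq> carrier M" using assms(2) by (meson in_set_takeD subsetD subsetI)
  then show ?thesis
    using assms by (simp add: split_image_def M.word_prod_append N.m_assoc)
qed

end

locale finite_alphabet = monoid_morphism M N \<phi>
  for M :: "('a, 'c) monoid_scheme" and N :: "('b, 'd) monoid_scheme" and \<phi> +
  fixes A :: "'a set"
  assumes alphabet_carrier: "A \<subseteq> carrier M" and finite_alphabet: "finite A"
begin

lemma words_carrier: "w \<in> lists A \<Longrightarrow> set w \<subseteq> carrier M"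
  using alphabet_carrier by auto

lemma word_prod_words_closed [simp]: "w \<in> lists A \<Longrightarrow> word_prod M w \<in> carrier M"
  using words_carrier by blast

lemma alphabet_closed [simp]: "c \<in> A \<Longrightarrow> c \<in> carrier M"
  using alphabet_carrier by blast

text \<open>In terms of paths of split images: words leading from (p, r) back to (p, r) through Q,
  and words starting at (p, r) whose path then stays in Q.\<close>
definition first_returns :: "('b \<times> 'b) set \<Rightarrow> 'b \<Rightarrow> 'b \<Rightarrow> 'a list set" where
  "first_returns Q p r = {g \<in> lists A. g \<noteq> [] \<and> word_prod M g \<in> trace_set \<phi> M N p r \<and>
     (\<forall>t. 0 < t \<and> t < length g \<longrightarrow> split_image p r g t \<in> Q)}"

definition non_returning :: "('b \<times> 'b) set \<Rightarrow> 'b \<Rightarrow> 'b \<Rightarrow> 'b \<Rightarrow> 'a list set" where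
  "non_returning Q p q r = {w \<in> lists A. \<phi> (word_prod M w) \<otimes>\<^bsub>N\<^esub> q = r \<and>
     (\<forall>t. 0 < t \<and> t \<le> length w \<longrightarrow> split_image p q w t \<in> Q)}"

lemma split_at_first_return:
  assumes "w \<in> lists A" "split_images p q w \<subseteq> P" "\<phi> (word_prod M w) \<otimes>\<^bsub>N\<^esub> q = r"
    and "p \<in> carrier N" "q \<in> carrier N"
    and "\<not> (\<forall>t. 0 < t \<and> t \<le> length w \<longrightarrow> split_image p q w t \<in> P - {(p, r)})"
  obtains g w' where "g \<in> first_returns (P - {(p, r)}) p r" "w = g @ w'" "w' \<in> lists A"
    "split_images p q w' \<subseteq> P" "\<phi> (word_prod M w') \<otimes>\<^bsub>N\<^esub> q = r"
proof -
  let ?Q = "P - {(p, r)}"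
  have in_P: "split_image p q w t \<in> P" if "t \<le> length w" for t
    using assms(2) that by (auto simp: split_images_def)
  define t0 where "t0 = (LEAST t. 0 < t \<and> t \<le> length w \<and> split_image p q w t \<notin> ?Q)"
  have t0: "0 < t0" "t0 \<le> length w" "split_image p q w t0 \<notin> ?Q"
    using LeastI_ex[of "\<lambda>t. 0 < t \<and> t \<le> length w \<and> split_image p q w t \<notin> ?Q"] assms(6)
    unfolding t0_def by auto
  have before_t0: "split_image p q w t \<in> ?Q" if "0 < t" "t < t0" for t
    using not_less_Least[of t "\<lambda>t. 0 < t \<and> t \<le> length w \<and> split_image p q w t \<notin> ?Q"] that t0(2)
    unfolding t0_def by auto
  define g where "g = take t0 w"
  define w' where "w' = drop t0 w"
  have w_split: "w = g @ w'" and g_length: "length g = t0"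
    using t0(2) by (simp_all add: g_def w'_def)
  have gA: "g \<in> lists A" and w'A: "w' \<in> lists A"
    using assms(1) unfolding g_def w'_def by (auto dest: in_set_takeD in_set_dropD)
  have gM: "set g \<subseteq> carrier M" and w'M: "set w' \<subseteq> carrier M"
    using gA w'A words_carrier by blast+
  have "split_image p q w t0 = (p, r)" using in_P[OF t0(2)] t0(3) by blast
  then have returns_p: "p \<otimes>\<^bsub>N\<^esub> \<phi> (word_prod M g) = p" and w'_r: "\<phi> (word_prod M w') \<otimes>\<^bsub>N\<^esub> q = r"
    by (simp_all add: split_image_def g_def w'_def)
  have "split_image p r g t = split_image p q w t" if "t \<le> length g" for t
    using split_image_append_left[OF gM w'M \<open>q \<in> carrier N\<close> that] w_split w'_r by simp
  moreover have "\<phi> (word_prod M g) \<otimes>\<^bsub>N\<^esub> r = r"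
    using assms(3,5) gM w'M by (simp add: w_split M.word_prod_append N.m_assoc flip: w'_r)
  ultimately have "g \<in> first_returns ?Q p r"
    using gA returns_p t0(1) g_length before_t0 by (auto simp: first_returns_def trace_set_def)
  moreover have "split_images p q w' \<subseteq> P"
  proof -
    have "split_image p q w' s = split_image p q w (t0 + s)" for s
      using split_image_append_right[OF gM w'M \<open>p \<in> carrier N\<close>, of q s] w_split returns_p g_length
      by simp
    moreover have "t0 + s \<le> length w" if "s \<le> length w'" for s
      using that t0(2) by (simp add: w'_def)
    ultimately show ?thesis using in_P by (auto simp: split_images_def)
  qed
  ultimately show ?thesis using that w_split w'A w'_r by blast
qed

lemma decompose_at_returns:
  assumes "w \<in> lists A" "split_images p q w \<subseteq> P" "\<phi> (word_prod M w) \<otimes>\<^bsub>N\<^esub> q = r"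
    and "p \<in> carrier N" "q \<in> carrier N"
  shows "\<exists>gs t. set gs \<subseteq> first_returns (P - {(p, r)}) p r \<and>
    t \<in> non_returning (P - {(p, r)}) p q r \<and> w = concat gs @ t"
  using assms(1-3)
proof (induction w rule: length_induct)
  case (1 w)
  show ?case
  proof (cases "\<forall>t. 0 < t \<and> t \<le> length w \<longrightarrow> split_image p q w t \<in> P - {(p, r)}")
    case True
    then have "w \<in> non_returning (P - {(p, r)}) p q r" using "1.prems" by (simp add: non_returning_def)
    then show ?thesis by (intro exI[of _ "[]"] exI[of _ w]) auto
  next
    case False
    then obtain g w' where g: "g \<in> first_returns (P - {(p, r)}) p r" and w_split: "w = g @ w'"
      and w': "w' \<in> lists A" "split_images p q w' \<subseteq> P" "\<phi> (word_prod M w') \<otimes>\<^bsub>N\<^esub> q = r"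
      using split_at_first_return[OF "1.prems" assms(4,5)] by blast
    moreover have "length w' < length w"
      using g w_split by (simp add: first_returns_def)
    ultimately obtain gs t where "set gs \<subseteq> first_returns (P - {(p, r)}) p r"
      "t \<in> non_returning (P - {(p, r)}) p q r" "w' = concat gs @ t"
      using "1.IH" by blast
    then show ?thesis using g w_split by (intro exI[of _ "g # gs"]) auto
  qed
qed

definition sandwiches :: "('b \<times> 'b) set \<Rightarrow> 'b \<Rightarrow> 'b \<Rightarrow> ('a \<times> 'a \<Rightarrow> 'a) set" where
  "sandwiches P p q = (\<lambda>w. sandwich p q (word_prod M w)) ` {w \<in> lists A. split_images p q w \<subseteq> P}"

lemma split_images_Cons:
  assumes "c \<in> A" "w \<in> lists A" "p \<in> carrier N" "split_image p q (c # w) (Suc s) \<in> Q"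
  shows "split_image (p \<otimes>\<^bsub>N\<^esub> \<phi> c) q w s \<in> Q"
  using assms split_image_append_right[of "[c]" w p q s] words_carrier alphabet_carrier by auto

lemma finite_non_returning_sandwiches:
  assumes "p \<in> carrier N" and IH: "\<And>p'. p' \<in> carrier N \<Longrightarrow> finite (sandwiches Q p' q)"
  shows "finite ((\<lambda>w. sandwich p q (word_prod M w)) ` non_returning Q p q r)"
proof (rule finite_subset)
  show "(\<lambda>w. sandwich p q (word_prod M w)) ` non_returning Q p q r \<subseteq>
    insert (sandwich p q \<one>\<^bsub>M\<^esub>) (\<Union>c\<in>A. left_shift p q c ` sandwiches Q (p \<otimes>\<^bsub>N\<^esub> \<phi> c) q)"
  proof (rule image_subsetI)
    fix w assume w: "w \<in> non_returning Q p q r"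
    show "sandwich p q (word_prod M w) \<in>
      insert (sandwich p q \<one>\<^bsub>M\<^esub>) (\<Union>c\<in>A. left_shift p q c ` sandwiches Q (p \<otimes>\<^bsub>N\<^esub> \<phi> c) q)"
    proof (cases w)
      case (Cons c w')
      with w have c: "c \<in> A" and w': "w' \<in> lists A"
        and steps: "\<And>s. s \<le> length w' \<Longrightarrow> split_image p q (c # w') (Suc s) \<in> Q"
        by (auto simp: non_returning_def)
      have "split_images (p \<otimes>\<^bsub>N\<^esub> \<phi> c) q w' \<subseteq> Q"
        using split_images_Cons[OF c w' assms(1) steps] by (auto simp: split_images_def)
      then have "sandwich (p \<otimes>\<^bsub>N\<^esub> \<phi> c) q (word_prod M w') \<in> sandwiches Q (p \<otimes>\<^bsub>N\<^esub> \<phi> c) q"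
        using w' by (auto simp: sandwiches_def)
      moreover have "sandwich p q (word_prod M w) = left_shift p q c (sandwich (p \<otimes>\<^bsub>N\<^esub> \<phi> c) q (word_prod M w'))"
        using Cons c w' by (simp add: sandwich_mult_left)
      ultimately show ?thesis using c by blast
    qed simp
  qed
  show "finite (insert (sandwich p q \<one>\<^bsub>M\<^esub>) (\<Union>c\<in>A. left_shift p q c ` sandwiches Q (p \<otimes>\<^bsub>N\<^esub> \<phi> c) q))"
    using finite_alphabet IH assms(1) alphabet_carrier by blast
qed

lemma sandwich_first_return:
  assumes "g \<in> first_returns Q p r" "p \<in> carrier N" "r \<in> carrier N"
  shows "sandwich p r (word_prod M g) \<in> (\<lambda>c. sandwich p r c) ` A \<union>
    (\<Union>c\<in>A. \<Union>d\<in>A. left_shift p r c ` right_shift (p \<otimes>\<^bsub>N\<^esub> \<phi> c) r d `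
      sandwiches Q (p \<otimes>\<^bsub>N\<^esub> \<phi> c) (\<phi> d \<otimes>\<^bsub>N\<^esub> r))"
proof -
  from assms(1) obtain c g' where g: "g = c # g'" and c: "c \<in> A" and g': "g' \<in> lists A"
    and steps: "\<And>t. 0 < t \<Longrightarrow> t < length g \<Longrightarrow> split_image p r g t \<in> Q"
    by (cases g) (auto simp: first_returns_def)
  show ?thesis
  proof (cases g' rule: rev_exhaust)
    case Nil
    then show ?thesis using g c by simp
  next
    case (snoc h d)
    with g' have h: "h \<in> lists A" and d: "d \<in> A" by auto
    have "split_image (p \<otimes>\<^bsub>N\<^esub> \<phi> c) (\<phi> d \<otimes>\<^bsub>N\<^esub> r) h s \<in> Q" if "s \<le> length h" for s
    proof -
      have "split_image (p \<otimes>\<^bsub>N\<^esub> \<phi> c) r (h @ [d]) s \<in> Q"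
        using split_images_Cons[OF c g' assms(2)] steps[of "Suc s"] that g snoc by simp
      then show ?thesis
        using split_image_append_left[of h "[d]" r s "p \<otimes>\<^bsub>N\<^esub> \<phi> c"] h d assms(3) that words_carrier
        by simp
    qed
    then have "sandwich (p \<otimes>\<^bsub>N\<^esub> \<phi> c) (\<phi> d \<otimes>\<^bsub>N\<^esub> r) (word_prod M h) \<in>
        sandwiches Q (p \<otimes>\<^bsub>N\<^esub> \<phi> c) (\<phi> d \<otimes>\<^bsub>N\<^esub> r)"
      using h by (auto simp: sandwiches_def split_images_def)
    moreover have "word_prod M g = c \<otimes>\<^bsub>M\<^esub> (word_prod M h \<otimes>\<^bsub>M\<^esub> d)"
      using g snoc h d words_carrier by (simp add: M.word_prod_append)
    then have "sandwich p r (word_prod M g) =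
        left_shift p r c (right_shift (p \<otimes>\<^bsub>N\<^esub> \<phi> c) r d
          (sandwich (p \<otimes>\<^bsub>N\<^esub> \<phi> c) (\<phi> d \<otimes>\<^bsub>N\<^esub> r) (word_prod M h)))"
      using c d h sandwich_mult_left[of c "word_prod M h \<otimes>\<^bsub>M\<^esub> d"] sandwich_mult_right[of d "word_prod M h"]
      by simp
    ultimately show ?thesis using c d by blast
  qed
qed

lemma finite_first_return_classes:
  assumes "p \<in> carrier N" "r \<in> carrier N"
    and IH: "\<And>p' r'. p' \<in> carrier N \<Longrightarrow> r' \<in> carrier N \<Longrightarrow> finite (sandwiches Q p' r')"
  shows "finite ((\<lambda>g. trace_rel \<phi> M N p r `` {word_prod M g}) ` first_returns Q p r)"
proof -
  let ?S = "(\<lambda>c. sandwich p r c) ` A \<union>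
    (\<Union>c\<in>A. \<Union>d\<in>A. left_shift p r c ` right_shift (p \<otimes>\<^bsub>N\<^esub> \<phi> c) r d `
      sandwiches Q (p \<otimes>\<^bsub>N\<^esub> \<phi> c) (\<phi> d \<otimes>\<^bsub>N\<^esub> r))"
  have "finite ?S" using finite_alphabet IH assms(1,2) by simp
  moreover have "(\<lambda>g. trace_rel \<phi> M N p r `` {word_prod M g}) ` first_returns Q p r \<subseteq>
      (\<lambda>F. {m \<in> trace_set \<phi> M N p r. sandwich p r m = F}) ` ?S"
    using sandwich_first_return[OF _ assms(1,2)]
    by (force simp: trace_class first_returns_def)
  ultimately show ?thesis by (meson finite_imageI finite_subset)
qed

lemma concat_first_returns:
  assumes "set gs \<subseteq> first_returns Q p r" "p \<in> carrier N" "r \<in> carrier N"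
  shows "word_prod M (concat gs) \<in> trace_set \<phi> M N p r"
    and "trace_rel \<phi> M N p r `` {word_prod M (concat gs)} \<in>
      gen_submonoid (trace_monoid \<phi> M N p r) ((\<lambda>g. trace_rel \<phi> M N p r `` {word_prod M g}) ` first_returns Q p r)"
proof -
  have gs: "concat gs \<in> lists A" "set (map (word_prod M) gs) \<subseteq> trace_set \<phi> M N p r"
    using assms(1) by (induction gs) (auto simp: first_returns_def)
  then have prod: "word_prod M (concat gs) = word_prod M (map (word_prod M) gs)"
    using words_carrier M.word_prod_concat by blast
  show "word_prod M (concat gs) \<in> trace_set \<phi> M N p r"
    unfolding prod using word_prod_in_submonoid[OF trace_set_submonoid[OF assms(2,3)] gs(2)] .
  show "trace_rel \<phi> M N p r `` {word_prod M (concat gs)} \<in>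
      gen_submonoid (trace_monoid \<phi> M N p r) ((\<lambda>g. trace_rel \<phi> M N p r `` {word_prod M g}) ` first_returns Q p r)"
    unfolding prod trace_class_word_prod[OF assms(2,3) gs(2)]
    using assms(1) by (intro word_prod_in_gen_submonoid) (auto simp: subset_iff)
qed

end

locale locally_finite_traces = finite_alphabet M N \<phi> A
  for M :: "('a, 'c) monoid_scheme" and N :: "('b, 'd) monoid_scheme" and \<phi> and A +
  assumes locally_finite_traces:
    "\<And>p r. p \<in> carrier N \<Longrightarrow> r \<in> carrier N \<Longrightarrow> locally_finite_monoid (trace_monoid \<phi> M N p r)"
begin

lemma finite_sandwiches_through:
  assumes "p \<in> carrier N" "q \<in> carrier N" "r \<in> carrier N"
    and IH: "\<And>p' q'. p' \<in> carrier N \<Longrightarrow> q' \<in> carrier N \<Longrightarrow> finite (sandwiches (P - {(p, r)}) p' q')"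
  shows "finite ((\<lambda>w. sandwich p q (word_prod M w)) `
    {w \<in> lists A. split_images p q w \<subseteq> P \<and> \<phi> (word_prod M w) \<otimes>\<^bsub>N\<^esub> q = r})"
proof -
  let ?Q = "P - {(p, r)}" and ?R = "trace_rel \<phi> M N p r" and ?T = "trace_monoid \<phi> M N p r"
  define B where "B = (\<lambda>g. ?R `` {word_prod M g}) ` first_returns ?Q p r"
  define K where "K = gen_submonoid ?T B"
  have "B \<subseteq> carrier ?T"
    by (auto simp: B_def first_returns_def trace_monoid_def intro: quotientI)
  moreover have "finite B"
    unfolding B_def using finite_first_return_classes assms(1,3) IH .
  ultimately have finite_K: "finite K"
    using locally_finite_traces[OF assms(1,3)] by (simp add: K_def locally_finite_monoid_def)
  have finite_tails: "finite ((\<lambda>t. sandwich p q (word_prod M t)) ` non_returning ?Q p q r)"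
    using finite_non_returning_sandwiches[OF assms(1) IH[OF _ assms(2)]] .
  define \<Phi> where "\<Phi> = (\<lambda>(C, F). left_shift p q (SOME m. m \<in> C) F)"
  have cover: "(\<lambda>w. sandwich p q (word_prod M w)) `
      {w \<in> lists A. split_images p q w \<subseteq> P \<and> \<phi> (word_prod M w) \<otimes>\<^bsub>N\<^esub> q = r} \<subseteq>
    \<Phi> ` (K \<times> (\<lambda>t. sandwich p q (word_prod M t)) ` non_returning ?Q p q r)"
  proof (rule image_subsetI)
    fix w assume "w \<in> {w \<in> lists A. split_images p q w \<subseteq> P \<and> \<phi> (word_prod M w) \<otimes>\<^bsub>N\<^esub> q = r}"
    then have w: "w \<in> lists A" "split_images p q w \<subseteq> P" "\<phi> (word_prod M w) \<otimes>\<^bsub>N\<^esub> q = r"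
      by simp_all
    then obtain gs t where gs: "set gs \<subseteq> first_returns ?Q p r" and t: "t \<in> non_returning ?Q p q r"
      and w_eq: "w = concat gs @ t"
      using decompose_at_returns[OF w assms(1,2)] by blast
    let ?m = "word_prod M (concat gs)"
    have m: "?m \<in> trace_set \<phi> M N p r" "?R `` {?m} \<in> K"
      using concat_first_returns[OF gs assms(1,3)] by (simp_all add: K_def B_def)
    have tA: "t \<in> lists A" and t_r: "\<phi> (word_prod M t) \<otimes>\<^bsub>N\<^esub> q = r"
      using t by (auto simp: non_returning_def)
    have "word_prod M w = ?m \<otimes>\<^bsub>M\<^esub> word_prod M t"
      using w(1) tA M.word_prod_append[OF words_carrier words_carrier] by (simp add: w_eq)
    moreover have "?m \<in> ?R `` {?m}"
      using m(1) by (simp add: trace_class)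
    then have "(SOME m'. m' \<in> ?R `` {?m}) \<in> ?R `` {?m}"
      by (rule someI)
    ultimately have "sandwich p q (word_prod M w) = \<Phi> (?R `` {?m}, sandwich p q (word_prod M t))"
      using sandwich_mult_trace_class[OF _ _ t_r] tA by (simp add: \<Phi>_def)
    then show "sandwich p q (word_prod M w) \<in> \<Phi> ` (K \<times> (\<lambda>t. sandwich p q (word_prod M t)) ` non_returning ?Q p q r)"
      using m(2) t by blast
  qed
  show ?thesis
    using finite_subset[OF cover finite_imageI[OF finite_cartesian_product[OF finite_K finite_tails]]] .
qed

lemma finite_sandwiches:
  assumes "finite P" "p \<in> carrier N" "q \<in> carrier N"
  shows "finite (sandwiches P p q)"
  using assms
proof (induction P arbitrary: p q rule: finite_psubset_induct)
  case (psubset P)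
  let ?R = "{r \<in> carrier N. (p, r) \<in> P}"
  let ?through = "\<lambda>r. (\<lambda>w. sandwich p q (word_prod M w)) `
    {w \<in> lists A. split_images p q w \<subseteq> P \<and> \<phi> (word_prod M w) \<otimes>\<^bsub>N\<^esub> q = r}"
  have "sandwiches P p q \<subseteq> (\<Union>r \<in> ?R. ?through r)"
    unfolding sandwiches_def
  proof (rule image_subsetI)
    fix w assume w: "w \<in> {w \<in> lists A. split_images p q w \<subseteq> P}"
    then have "split_image p q w 0 \<in> P" by (auto simp: split_images_def)
    then have "(p, \<phi> (word_prod M w) \<otimes>\<^bsub>N\<^esub> q) \<in> P" by (simp add: split_image_0 psubset.prems)
    moreover have "\<phi> (word_prod M w) \<otimes>\<^bsub>N\<^esub> q \<in> carrier N"
      using w psubset.prems by simp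
    ultimately show "sandwich p q (word_prod M w) \<in> (\<Union>r \<in> ?R. ?through r)"
      using w by (intro UN_I[of "\<phi> (word_prod M w) \<otimes>\<^bsub>N\<^esub> q"]) auto
  qed
  moreover have "finite ?R"
    using finite_subset[of ?R "snd ` P"] psubset.hyps by force
  moreover have "finite (?through r)" if "r \<in> ?R" for r
    using finite_sandwiches_through[OF psubset.prems _ psubset.IH] that by blast
  ultimately show ?case by (meson finite_UN_I finite_subset)
qed

lemma finite_gen_submonoid:
  assumes "locally_finite_monoid N"
  shows "finite (gen_submonoid M A)"
proof -
  define T where "T = gen_submonoid N (\<phi> ` A)"
  have "\<phi> ` A \<subseteq> carrier N"
    using alphabet_carrier by auto
  then have "finite T"
    using assms finite_alphabet by (simp add: T_def locally_finite_monoid_def)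
  have image_in_T: "\<phi> (word_prod M u) \<in> T" if "u \<in> lists A" for u
  proof -
    have "map \<phi> u \<in> lists (\<phi> ` A)" using that by auto
    then show ?thesis
      using hom_word_prod[OF words_carrier[OF that]] by (simp add: T_def word_prod_in_gen_submonoid)
  qed
  have "word_prod M w \<in> (\<lambda>F. F (\<one>\<^bsub>M\<^esub>, \<one>\<^bsub>M\<^esub>)) ` sandwiches (T \<times> T) \<one>\<^bsub>N\<^esub> \<one>\<^bsub>N\<^esub>"
    if "w \<in> lists A" for w
  proof -
    have "split_image \<one>\<^bsub>N\<^esub> \<one>\<^bsub>N\<^esub> w t \<in> T \<times> T" for t
    proof -
      have "take t w \<in> lists A" "drop t w \<in> lists A"
        using that by (auto dest: in_set_takeD in_set_dropD)
      then show ?thesis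
        using image_in_T by (simp add: split_image_def)
    qed
    then have "split_images \<one>\<^bsub>N\<^esub> \<one>\<^bsub>N\<^esub> w \<subseteq> T \<times> T"
      unfolding split_images_def by blast
    then have "sandwich \<one>\<^bsub>N\<^esub> \<one>\<^bsub>N\<^esub> (word_prod M w) \<in> sandwiches (T \<times> T) \<one>\<^bsub>N\<^esub> \<one>\<^bsub>N\<^esub>"
      using that unfolding sandwiches_def by blast
    moreover have "word_prod M w = sandwich \<one>\<^bsub>N\<^esub> \<one>\<^bsub>N\<^esub> (word_prod M w) (\<one>\<^bsub>M\<^esub>, \<one>\<^bsub>M\<^esub>)"
      using that by (simp add: sandwich_one_one)
    ultimately show ?thesis by (rule rev_image_eqI[where f = "\<lambda>F. F (\<one>\<^bsub>M\<^esub>, \<one>\<^bsub>M\<^esub>)"])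
  qed
  then have "word_prod M ` lists A \<subseteq> (\<lambda>F. F (\<one>\<^bsub>M\<^esub>, \<one>\<^bsub>M\<^esub>)) ` sandwiches (T \<times> T) \<one>\<^bsub>N\<^esub> \<one>\<^bsub>N\<^esub>"
    by blast
  moreover have "finite (sandwiches (T \<times> T) \<one>\<^bsub>N\<^esub> \<one>\<^bsub>N\<^esub>)"
    using finite_sandwiches[of "T \<times> T"] \<open>finite T\<close> by simp
  ultimately show ?thesis
    using M.gen_submonoid_subset_word_prods[OF alphabet_carrier]
    by (meson finite_imageI finite_subset)
qed

end

theorem theorem2p1:
  fixes M :: "('a, 'c) monoid_scheme" and N :: "('b, 'd) monoid_scheme" and \<phi> :: "'a \<Rightarrow> 'b"
  assumes "monoid M" and "monoid N"
    and "\<phi> \<in> monoid_hom M N"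
    and "locally_finite_monoid N"
    and "\<forall>n1 \<in> carrier N. \<forall>n2 \<in> carrier N. locally_finite_monoid (trace_monoid \<phi> M N n1 n2)"
  shows "locally_finite_monoid M"
  unfolding locally_finite_monoid_def
proof (intro allI impI)
  fix A assume "A \<subseteq> carrier M \<and> finite A"
  then interpret locally_finite_traces M N \<phi> A
    using assms by (auto simp: locally_finite_traces_def locally_finite_traces_axioms_def
        finite_alphabet_def finite_alphabet_axioms_def monoid_morphism_def monoid_morphism_axioms_def)
  show "finite (gen_submonoid M A)"
    using finite_gen_submonoid assms(4) .
qed

end
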